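(* Let $\alpha\in\mathbb{Z}_{>0}$, $\beta\in\mathbb{R}_{>0}$, $\gamma\in\mathbb{R}$, and let $(a_n)_n$ be a sequence with asymptotic expansion \[ a_n \approx n^{\alpha n}\beta^n n^\gamma\,\tilde A(n^{-1}) \] for some nonzero formal power series $\tilde A(z)$. For $j\in\mathbb{Z}_{\geq 0}$ define the formal power series \[ \tilde A_j(z) = e^{-\alpha j}\beta^{-j} z^{\alpha j}(1-jz)^{\gamma-\alpha j}\, e^{\alpha z^{-1}(\log(1-jz)+jz)}\,\tilde A\!\left(\frac{z}{1-jz}\right). \] Then for any fixed $j\in\mathbb{Z}_{\geq 0}$, as $n\to\infty$, \[ a_{n-j} \approx n^{\alpha n}\beta^n n^\gamma\,\tilde A_j(n^{-1}). \]
   Context: For a formal power series $\tilde F(z)$, $f_n \approx b_n\tilde F(n^{-1})$ means that for every fixed $r\geq 0$, $f_n = b_n\big(\sum_{\ell=0}^{r-1}[z^\ell]\tilde F(z)\,n^{-\ell} + O(n^{-r})\big)$ as $n\to\infty$. *)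

theory Defs
  imports "HOL-Analysis.Analysis" "HOL-Computational_Algebra.Formal_Power_Series"
    "HOL-Library.Landau_Symbols"
begin

definition asymp_expansion :: "(nat \<Rightarrow> real) \<Rightarrow> (nat \<Rightarrow> real) \<Rightarrow> real fps \<Rightarrow> bool" where
  "asymp_expansion f b F \<longleftrightarrow>
     (\<forall>r::nat. \<exists>e. e \<in> O(\<lambda>n. (1 / real n) ^ r) \<and>
        (\<forall>\<^sub>F n in at_top. f n = b n * ((\<Sum>l<r. fps_nth F l * (1 / real n) ^ l) + e n)))"

definition growth_scale :: "nat \<Rightarrow> real \<Rightarrow> real \<Rightarrow> nat \<Rightarrow> real" where
  "growth_scale \<alpha> \<beta> \<gamma> n = real n ^ (\<alpha> * n) * \<beta> ^ n * real n powr \<gamma>"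

definition fps_one_minus_pow :: "real \<Rightarrow> real \<Rightarrow> real fps" where
  "fps_one_minus_pow j c = fps_binomial c oo (fps_const (- j) * fps_X)"

definition fps_log_one_minus :: "real \<Rightarrow> real fps" where
  "fps_log_one_minus j = fps_ln 1 oo (fps_const (- j) * fps_X)"

text \<open>exp(alpha z^{-1} (log(1 - jz) + jz)); the argument of exp is a power series with
  zero constant term (division by z = shift by one).\<close>
definition fps_exp_part :: "real \<Rightarrow> real \<Rightarrow> real fps" where
  "fps_exp_part \<alpha> j =
     fps_exp 1 oo (fps_const \<alpha> * fps_shift 1 (fps_log_one_minus j + fps_const j * fps_X))"

definition A_j :: "nat \<Rightarrow> real \<Rightarrow> real \<Rightarrow> real fps \<Rightarrow> nat \<Rightarrow> real fps" where
  "A_j \<alpha> \<beta> \<gamma> A j =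
     fps_const (exp (- real \<alpha> * real j) * \<beta> powi (- int j)) * fps_X ^ (\<alpha> * j)
     * fps_one_minus_pow (real j) (\<gamma> - real \<alpha> * real j)
     * fps_exp_part (real \<alpha>) (real j)
     * (A oo (fps_X * inverse (1 - fps_const (real j) * fps_X)))"

end

theory Submission
  imports Defs "HOL-Computational_Algebra.Polynomial_FPS" "HOL-Real_Asymp.Real_Asymp"
begin

(* Put x = 1/n and s_n = n^(alpha n) beta^n n^gamma. The hypothesis says that a_n / s_n has the
   asymptotic expansion A(x), and expansions of this kind are closed under sums, products
   and composition with functions analytic at 0: truncating the power series at order r
   leaves x^r times a function that is bounded near 0. Replacing n by n - j substitutes
   x/(1 - jx) for x, and the ratio s_(n-j) / s_n equals, in closed form,
   e^(-alpha j) beta^(-j) x^(alpha j) (1 - jx)^(gamma - alpha j) exp(alpha x^(-1) (log(1 - jx) + jx)),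
   each factor being analytic in x. *)

lemma inverse_power_bigo_mono:
  assumes "r \<le> s"
  shows "(\<lambda>n. (1 / real n) ^ s) \<in> O(\<lambda>n. (1 / real n) ^ r)"
proof (rule bigoI[of _ 1])
  have "(1 / real n) ^ s \<le> (1 / real n) ^ r" for n
    using assms by (intro power_decreasing) (auto simp: divide_le_eq)
  then show "\<forall>\<^sub>F n in at_top. norm ((1 / real n) ^ s) \<le> 1 * norm ((1 / real n) ^ r)"
    by simp
qed

lemma poly_inverse_bigo:
  fixes p :: "real poly"
  assumes "\<forall>l<r. coeff p l = 0"
  shows "(\<lambda>n. poly p (1 / real n)) \<in> O(\<lambda>n. (1 / real n) ^ r)"
  unfolding poly_altdef
proof (intro big_sum_in_bigo)
  fix i
  show "(\<lambda>n. coeff p i * (1 / real n) ^ i) \<in> O(\<lambda>n. (1 / real n) ^ r)"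
  proof (cases "i < r")
    case True
    then show ?thesis using assms by simp
  next
    case False
    then have "(\<lambda>n. (1 / real n) ^ i) \<in> O(\<lambda>n. (1 / real n) ^ r)"
      by (intro inverse_power_bigo_mono) simp
    then show ?thesis by (rule cmult_in_bigo_iff[THEN iffD2, OF disjI2])
  qed
qed

lemma inverse_shift_bigo: "(\<lambda>n. 1 / real (n - j)) \<in> O(\<lambda>n. 1 / real n)"
proof -
  have "\<forall>\<^sub>F n in at_top. 1 / (real n - real j) = 1 / real (n - j)"
    using eventually_ge_at_top[of j] by eventually_elim (simp add: of_nat_diff)
  moreover have "(\<lambda>n. 1 / (real n - real j)) \<in> O(\<lambda>n. 1 / real n)"
    by real_asymp
  ultimately show ?thesis
    by (rule landau_o.big.in_cong[THEN iffD1])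
qed

lemma truncate_fps_Suc: "truncate_fps (Suc r) F = truncate_fps r F + monom (fps_nth F r) r"
  by (rule poly_eqI) (simp add: coeff_truncate_fps coeff_monom)

lemma poly_truncate_fps:
  fixes F :: "'a :: comm_semiring_1 fps"
  shows "poly (truncate_fps r F) x = (\<Sum>l<r. fps_nth F l * x ^ l)"
  by (induction r) (simp_all add: truncate_fps_Suc poly_monom)

lemma truncate_fps_Suc_shift:
  assumes "fps_nth F 0 = 0"
  shows "truncate_fps (Suc r) F = pCons 0 (truncate_fps r (fps_shift 1 F))"
  using assms by (intro poly_eqI) (simp add: coeff_truncate_fps coeff_pCons split: nat.split)

lemma truncate_fps_compose_cutoff:
  "truncate_fps r (fps_cutoff r F oo U) = truncate_fps r (F oo U)"
  by (rule poly_eqI) (auto simp: coeff_truncate_fps fps_compose_nth intro!: sum.cong)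

lemma eval_fps_truncate_shift:
  fixes F :: "'a :: {banach, real_normed_field} fps"
  assumes "norm x < fps_conv_radius F"
  shows "eval_fps F x = poly (truncate_fps r F) x + x ^ r * eval_fps (fps_shift r F) x"
proof -
  have "summable (\<lambda>n. fps_nth F n * x ^ n)"
    by (rule summable_fps[OF assms])
  then have "eval_fps F x = (\<Sum>n. fps_nth F (n + r) * x ^ (n + r)) + (\<Sum>l<r. fps_nth F l * x ^ l)"
    unfolding eval_fps_def by (rule suminf_split_initial_segment)
  also have "(\<Sum>n. fps_nth F (n + r) * x ^ (n + r)) = x ^ r * eval_fps (fps_shift r F) x"
    using suminf_mult[OF summable_fps[of x "fps_shift r F"], of "x ^ r"] assms
    by (simp add: eval_fps_def power_add algebra_simps)
  finally show ?thesis
    by (simp add: poly_truncate_fps)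
qed

lemma has_fps_expansion_truncate_shift:
  fixes f :: "'a :: {banach, real_normed_field} \<Rightarrow> 'a"
  assumes "f has_fps_expansion F"
  shows "\<forall>\<^sub>F x in nhds 0. f x = poly (truncate_fps r F) x + x ^ r * eval_fps (fps_shift r F) x"
proof -
  have "\<forall>\<^sub>F x in nhds 0. x \<in> eball 0 (fps_conv_radius F)"
    using assms by (intro eventually_nhds_in_open) (auto simp: has_fps_expansion_def zero_ereal_def)
  moreover have "\<forall>\<^sub>F x in nhds 0. eval_fps F x = f x"
    using assms by (simp add: has_fps_expansion_def)
  ultimately show ?thesis
  proof eventually_elim
    case (elim x)
    then show ?case using eval_fps_truncate_shift[of x F r] by simp
  qed
qed

lemma has_fps_expansion_ln_real: "(\<lambda>x::real. ln (1 + x)) has_fps_expansion fps_ln 1"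
proof -
  have eval: "eval_fps (fps_ln 1) x = ln (1 + x)" if "x \<in> ball 0 1" for x :: real
  proof -
    have "- ((- x) ^ n) / real n = fps_nth (fps_ln 1) n * x ^ n" for n
      by (cases n) (simp_all add: fps_ln_nth power_minus' field_simps)
    with ln_series'[of x] that show ?thesis
      by (simp add: eval_fps_def sums_iff)
  qed
  have "\<forall>\<^sub>F x in nhds 0. x \<in> ball (0::real) 1"
    by (rule eventually_nhds_in_open) auto
  then have "\<forall>\<^sub>F x in nhds 0. eval_fps (fps_ln 1) x = ln (1 + x :: real)"
    using eval by (rule eventually_mono)
  then show ?thesis
    by (simp add: has_fps_expansion_def)
qed

lemma has_fps_expansion_binomial_real:
  "(\<lambda>x::real. (1 + x) powr c) has_fps_expansion fps_binomial c"
proof -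
  have eval: "eval_fps (fps_binomial c) x = (1 + x) powr c" if "x \<in> ball 0 1" for x :: real
    using gen_binomial_real[of x c] that by (simp add: eval_fps_def sums_iff)
  have "\<forall>\<^sub>F x in nhds 0. x \<in> ball (0::real) 1"
    by (rule eventually_nhds_in_open) auto
  then have "\<forall>\<^sub>F x in nhds 0. eval_fps (fps_binomial c) x = (1 + x :: real) powr c"
    using eval by (rule eventually_mono)
  then show ?thesis
    by (simp add: has_fps_expansion_def fps_conv_radius_binomial)
qed

definition has_asymp_expansion :: "(nat \<Rightarrow> real) \<Rightarrow> real fps \<Rightarrow> bool" where
  "has_asymp_expansion g F \<longleftrightarrow>
     (\<forall>r. (\<lambda>n. g n - poly (truncate_fps r F) (1 / real n)) \<in> O(\<lambda>n. (1 / real n) ^ r))"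

lemma has_asymp_expansionD:
  "has_asymp_expansion g F \<Longrightarrow>
     (\<lambda>n. g n - poly (truncate_fps r F) (1 / real n)) \<in> O(\<lambda>n. (1 / real n) ^ r)"
  unfolding has_asymp_expansion_def by blast

lemma has_asymp_expansionI:
  assumes "\<And>r. \<exists>p. (\<forall>l<r. coeff p l = fps_nth F l) \<and>
                    (\<lambda>n. g n - poly p (1 / real n)) \<in> O(\<lambda>n. (1 / real n) ^ r)"
  shows "has_asymp_expansion g F"
  unfolding has_asymp_expansion_def
proof
  fix r
  obtain p where p: "\<forall>l<r. coeff p l = fps_nth F l"
    and approx: "(\<lambda>n. g n - poly p (1 / real n)) \<in> O(\<lambda>n. (1 / real n) ^ r)"
    using assms by blast
  have "(\<lambda>n. poly (p - truncate_fps r F) (1 / real n)) \<in> O(\<lambda>n. (1 / real n) ^ r)"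
    using p by (intro poly_inverse_bigo) (simp add: coeff_truncate_fps)
  from sum_in_bigo(1)[OF approx this]
  show "(\<lambda>n. g n - poly (truncate_fps r F) (1 / real n)) \<in> O(\<lambda>n. (1 / real n) ^ r)"
    by (simp add: poly_diff)
qed

lemma has_asymp_expansion_cong:
  assumes "\<forall>\<^sub>F n in at_top. g n = h n" and "has_asymp_expansion g F"
  shows "has_asymp_expansion h F"
  unfolding has_asymp_expansion_def
proof
  fix r
  have "\<forall>\<^sub>F n in at_top. g n - poly (truncate_fps r F) (1 / real n) =
                        h n - poly (truncate_fps r F) (1 / real n)"
    using assms(1) by eventually_elim simp
  from landau_o.big.in_cong[OF this] has_asymp_expansionD[OF assms(2)]
  show "(\<lambda>n. h n - poly (truncate_fps r F) (1 / real n)) \<in> O(\<lambda>n. (1 / real n) ^ r)"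
    by blast
qed

lemma asymp_expansion_iff_has_asymp_expansion:
  assumes "\<forall>\<^sub>F n in at_top. b n \<noteq> 0"
  shows "asymp_expansion f b F \<longleftrightarrow> has_asymp_expansion (\<lambda>n. f n / b n) F"
proof -
  have "(\<exists>e. e \<in> O(\<lambda>n. (1 / real n) ^ r) \<and>
          (\<forall>\<^sub>F n in at_top. f n = b n * (poly (truncate_fps r F) (1 / real n) + e n))) \<longleftrightarrow>
        (\<lambda>n. f n / b n - poly (truncate_fps r F) (1 / real n)) \<in> O(\<lambda>n. (1 / real n) ^ r)"
    (is "(\<exists>e. e \<in> ?O \<and> (\<forall>\<^sub>F n in at_top. f n = b n * (?p n + e n))) \<longleftrightarrow> _") for r
  proof
    assume "\<exists>e. e \<in> ?O \<and> (\<forall>\<^sub>F n in at_top. f n = b n * (?p n + e n))"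
    then obtain e where e: "e \<in> ?O" and ev: "\<forall>\<^sub>F n in at_top. f n = b n * (?p n + e n)"
      by blast
    from assms ev have "\<forall>\<^sub>F n in at_top. e n = f n / b n - ?p n"
      by eventually_elim simp
    from landau_o.big.in_cong[OF this] e show "(\<lambda>n. f n / b n - ?p n) \<in> ?O"
      by blast
  next
    assume "(\<lambda>n. f n / b n - ?p n) \<in> ?O"
    moreover have "\<forall>\<^sub>F n in at_top. f n = b n * (?p n + (f n / b n - ?p n))"
      using assms by eventually_elim simp
    ultimately show "\<exists>e. e \<in> ?O \<and> (\<forall>\<^sub>F n in at_top. f n = b n * (?p n + e n))"
      by blast
  qed
  then show ?thesis
    unfolding asymp_expansion_def has_asymp_expansion_def poly_truncate_fps by blast
qed

lemma has_asymp_expansion_bounded: "has_asymp_expansion g F \<Longrightarrow> g \<in> O(\<lambda>_. 1)"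
  using has_asymp_expansionD[of g F 0] by simp

lemma has_asymp_expansion_const: "has_asymp_expansion (\<lambda>_. c) (fps_const c)"
  by (rule has_asymp_expansionI, rule exI[of _ "[:c:]"]) (simp add: coeff_pCons split: nat.split)

lemma has_asymp_expansion_fps_X: "has_asymp_expansion (\<lambda>n. 1 / real n) fps_X"
  by (rule has_asymp_expansionI, rule exI[of _ "[:0, 1:]"])
     (simp add: coeff_pCons fps_X_nth split: nat.split)

lemma has_asymp_expansion_add:
  assumes "has_asymp_expansion g F" "has_asymp_expansion h G"
  shows "has_asymp_expansion (\<lambda>n. g n + h n) (F + G)"
  unfolding has_asymp_expansion_def
proof
  fix r
  from sum_in_bigo(1)[OF assms[THEN has_asymp_expansionD[where r = r]]]
  show "(\<lambda>n. g n + h n - poly (truncate_fps r (F + G)) (1 / real n)) \<in> O(\<lambda>n. (1 / real n) ^ r)"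
    by (simp add: truncate_fps_add algebra_simps)
qed

lemma has_asymp_expansion_mult:
  assumes g: "has_asymp_expansion g F" and h: "has_asymp_expansion h G"
  shows "has_asymp_expansion (\<lambda>n. g n * h n) (F * G)"
proof (rule has_asymp_expansionI)
  fix r
  let ?x = "\<lambda>n. 1 / real n" and ?P = "truncate_fps r F" and ?Q = "truncate_fps r G"
  have "(\<lambda>n. (g n - poly ?P (?x n)) * h n) \<in> O(\<lambda>n. ?x n ^ r)"
    using has_asymp_expansionD[OF g] has_asymp_expansion_bounded[OF h]
    by (rule landau_o.big_1_mult)
  moreover have "(\<lambda>n. (h n - poly ?Q (?x n)) * poly ?P (?x n)) \<in> O(\<lambda>n. ?x n ^ r)"
    using has_asymp_expansionD[OF h] poly_inverse_bigo[of 0 ?P]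
    by (intro landau_o.big_1_mult) simp_all
  ultimately have "(\<lambda>n. g n * h n - poly (?P * ?Q) (?x n)) \<in> O(\<lambda>n. ?x n ^ r)"
    by (auto dest: sum_in_bigo(1) simp: algebra_simps)
  moreover have "\<forall>l<r. coeff (?P * ?Q) l = fps_nth (F * G) l"
    by (auto simp: coeff_mult fps_mult_nth atLeast0AtMost coeff_truncate_fps intro!: sum.cong)
  ultimately show "\<exists>p. (\<forall>l<r. coeff p l = fps_nth (F * G) l) \<and>
                     (\<lambda>n. g n * h n - poly p (?x n)) \<in> O(\<lambda>n. ?x n ^ r)"
    by blast
qed

lemma has_asymp_expansion_cmult:
  "has_asymp_expansion g F \<Longrightarrow> has_asymp_expansion (\<lambda>n. c * g n) (fps_const c * F)"
  by (rule has_asymp_expansion_mult[OF has_asymp_expansion_const])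

lemma has_asymp_expansion_power:
  "has_asymp_expansion g F \<Longrightarrow> has_asymp_expansion (\<lambda>n. g n ^ k) (F ^ k)"
  using has_asymp_expansion_const[of 1]
  by (induction k) (simp_all add: has_asymp_expansion_mult)

lemma has_asymp_expansion_times_n:
  assumes g: "has_asymp_expansion g G" and G0: "fps_nth G 0 = 0"
  shows "has_asymp_expansion (\<lambda>n. real n * g n) (fps_shift 1 G)"
  unfolding has_asymp_expansion_def
proof
  fix r
  let ?x = "\<lambda>n. 1 / real n" and ?Q = "truncate_fps r (fps_shift 1 G)"
  have "(\<lambda>n. real n * (g n - poly (truncate_fps (Suc r) G) (?x n))) \<in> O(\<lambda>n. real n * ?x n ^ Suc r)"
    using has_asymp_expansionD[OF g] by (rule landau_o.big.mult_left)
  also have "\<forall>\<^sub>F n in at_top. real n * ?x n ^ Suc r = ?x n ^ r"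
    using eventually_gt_at_top[of 0] by eventually_elim simp
  then have "O(\<lambda>n. real n * ?x n ^ Suc r) = O(\<lambda>n. ?x n ^ r)"
    by (rule landau_o.big.cong)
  also have "\<forall>\<^sub>F n in at_top. real n * (g n - poly (truncate_fps (Suc r) G) (?x n)) =
                              real n * g n - poly ?Q (?x n)"
    using eventually_gt_at_top[of 0]
    by eventually_elim (simp add: truncate_fps_Suc_shift[OF G0] right_diff_distrib)
  then have "(\<lambda>n. real n * (g n - poly (truncate_fps (Suc r) G) (?x n))) \<in> O(\<lambda>n. ?x n ^ r) \<longleftrightarrow>
             (\<lambda>n. real n * g n - poly ?Q (?x n)) \<in> O(\<lambda>n. ?x n ^ r)"
    by (rule landau_o.big.in_cong)
  finally show "(\<lambda>n. real n * g n - poly ?Q (?x n)) \<in> O(\<lambda>n. ?x n ^ r)" .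
qed

lemma has_asymp_expansion_bigo_inverse:
  assumes "has_asymp_expansion u U" "fps_nth U 0 = 0"
  shows "u \<in> O(\<lambda>n. 1 / real n)"
  using has_asymp_expansionD[OF assms(1), of 1] assms(2) by (simp add: truncate_fps_Suc)

lemma has_asymp_expansion_tendsto_0:
  assumes "has_asymp_expansion u U" "fps_nth U 0 = 0"
  shows "u \<longlonglongrightarrow> 0"
proof -
  have "(\<lambda>n. 1 / real n) \<in> o(\<lambda>_. 1)"
    by real_asymp
  with has_asymp_expansion_bigo_inverse[OF assms] have "u \<in> o(\<lambda>_. 1)"
    by (rule landau_o.big_small_trans)
  then show ?thesis
    using smalloD_tendsto by fastforce
qed

lemma has_asymp_expansion_poly_compose:
  assumes u: "has_asymp_expansion u U" and U0: "fps_nth U 0 = 0"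
  shows "has_asymp_expansion (\<lambda>n. poly p (u n)) (fps_of_poly p oo U)"
proof (induction p)
  case 0
  show ?case using has_asymp_expansion_const[of 0] by simp
next
  case (pCons a p)
  have "has_asymp_expansion (\<lambda>n. a + poly p (u n) * u n) (fps_const a + (fps_of_poly p oo U) * U)"
    by (intro has_asymp_expansion_add has_asymp_expansion_const has_asymp_expansion_mult pCons.IH u)
  then show ?case
    by (simp add: fps_of_poly_pCons fps_compose_add_distrib fps_compose_mult_distrib[OF U0] U0 mult.commute)
qed

lemma has_asymp_expansion_poly_truncate_compose:
  assumes "has_asymp_expansion u U" "fps_nth U 0 = 0"
  shows "(\<lambda>n. poly (truncate_fps r F) (u n) - poly (truncate_fps r (F oo U)) (1 / real n))
           \<in> O(\<lambda>n. (1 / real n) ^ r)"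
  using has_asymp_expansionD[OF has_asymp_expansion_poly_compose[OF assms], of "truncate_fps r F" r]
  by (simp add: truncate_fps_compose_cutoff)

lemma has_asymp_expansion_compose:
  assumes f: "f has_fps_expansion F"
    and u: "has_asymp_expansion u U" and U0: "fps_nth U 0 = 0"
  shows "has_asymp_expansion (\<lambda>n. f (u n)) (F oo U)"
  unfolding has_asymp_expansion_def
proof
  fix r
  let ?x = "\<lambda>n. 1 / real n" and ?R = "eval_fps (fps_shift r F)"
  have u0: "u \<longlonglongrightarrow> 0"
    by (rule has_asymp_expansion_tendsto_0[OF u U0])
  have "isCont ?R 0"
    using f by (intro continuous_eval_fps) (auto simp: has_fps_expansion_def zero_ereal_def)
  then have "(\<lambda>n. ?R (u n)) \<in> O(\<lambda>_. 1)"
    using u0 by (intro bigoI_tendsto[where c = "?R 0"]) (auto intro: isCont_tendsto_compose)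
  with landau_o.big_power[OF has_asymp_expansion_bigo_inverse[OF u U0], of r]
  have "(\<lambda>n. u n ^ r * ?R (u n)) \<in> O(\<lambda>n. ?x n ^ r)"
    by (auto intro: landau_o.big_1_mult simp: power_one_over)
  from sum_in_bigo(1)[OF has_asymp_expansion_poly_truncate_compose[OF u U0] this]
  have approx: "(\<lambda>n. poly (truncate_fps r F) (u n) + u n ^ r * ?R (u n)
                  - poly (truncate_fps r (F oo U)) (?x n)) \<in> O(\<lambda>n. ?x n ^ r)"
    by (simp add: algebra_simps)
  have "\<forall>\<^sub>F n in at_top. f (u n) = poly (truncate_fps r F) (u n) + u n ^ r * ?R (u n)"
    by (rule eventually_compose_filterlim[OF has_fps_expansion_truncate_shift[OF f] u0])
  then have "\<forall>\<^sub>F n in at_top.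
      poly (truncate_fps r F) (u n) + u n ^ r * ?R (u n) - poly (truncate_fps r (F oo U)) (?x n) =
      f (u n) - poly (truncate_fps r (F oo U)) (?x n)"
    by eventually_elim simp
  from landau_o.big.in_cong[OF this] approx
  show "(\<lambda>n. f (u n) - poly (truncate_fps r (F oo U)) (?x n)) \<in> O(\<lambda>n. ?x n ^ r)"
    by blast
qed

lemma has_asymp_expansion_shift:
  assumes g: "has_asymp_expansion g F"
  shows "has_asymp_expansion (\<lambda>n. g (n - j))
           (F oo (fps_X * inverse (1 - fps_const (real j) * fps_X)))"
    (is "has_asymp_expansion _ (F oo ?Y)")
  unfolding has_asymp_expansion_def
proof
  fix r
  let ?x = "\<lambda>n. 1 / real n" and ?y = "\<lambda>n. 1 / real n * inverse (1 - real j * (1 / real n))"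
  let ?e = "\<lambda>m. g m - poly (truncate_fps r F) (?x m)"
  have "(\<lambda>x::real. x * inverse (1 - real j * x)) has_fps_expansion ?Y"
    by (intro has_fps_expansion_mult has_fps_expansion_fps_X has_fps_expansion_inverse
          has_fps_expansion_diff has_fps_expansion_1 has_fps_expansion_cmult_left) simp
  from has_asymp_expansion_compose[OF this has_asymp_expansion_fps_X]
  have y: "has_asymp_expansion ?y ?Y"
    by simp
  have "(\<lambda>n. ?e (n - j)) \<in> O(\<lambda>n. ?x (n - j) ^ r)"
    using has_asymp_expansionD[OF g] filterlim_minus_const_nat_at_top
    by (rule landau_o.big.compose)
  also have "(\<lambda>n. ?x (n - j) ^ r) \<in> O(\<lambda>n. ?x n ^ r)"
    by (intro landau_o.big_power inverse_shift_bigo)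
  finally have shifted: "(\<lambda>n. ?e (n - j)) \<in> O(\<lambda>n. ?x n ^ r)" .
  have "fps_nth ?Y 0 = 0"
    by simp
  from sum_in_bigo(1)[OF shifted has_asymp_expansion_poly_truncate_compose[OF y this]]
  have approx: "(\<lambda>n. ?e (n - j) + (poly (truncate_fps r F) (?y n)
                  - poly (truncate_fps r (F oo ?Y)) (?x n))) \<in> O(\<lambda>n. ?x n ^ r)" .
  \<comment> \<open>For n > j, the point y n = x/(1 - jx) at x = 1/n is exactly 1/(n - j).\<close>
  have "\<forall>\<^sub>F n in at_top. ?e (n - j) + (poly (truncate_fps r F) (?y n)
                  - poly (truncate_fps r (F oo ?Y)) (?x n)) =
                  g (n - j) - poly (truncate_fps r (F oo ?Y)) (?x n)"
    using eventually_gt_at_top[of j]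
    by eventually_elim (simp add: of_nat_diff field_simps)
  from landau_o.big.in_cong[OF this] approx
  show "(\<lambda>n. g (n - j) - poly (truncate_fps r (F oo ?Y)) (?x n)) \<in> O(\<lambda>n. ?x n ^ r)"
    by blast
qed

lemma has_asymp_expansion_one_minus_pow:
  "has_asymp_expansion (\<lambda>n. (1 - c / real n) powr e) (fps_one_minus_pow c e)"
  using has_asymp_expansion_compose[OF has_fps_expansion_binomial_real
          has_asymp_expansion_cmult[OF has_asymp_expansion_fps_X, of "- c"]]
  by (simp add: fps_one_minus_pow_def)

lemma has_asymp_expansion_log_one_minus:
  "has_asymp_expansion (\<lambda>n. ln (1 - c / real n)) (fps_log_one_minus c)"
  using has_asymp_expansion_compose[OF has_fps_expansion_ln_real
          has_asymp_expansion_cmult[OF has_asymp_expansion_fps_X, of "- c"]]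
  by (simp add: fps_log_one_minus_def)

lemma has_asymp_expansion_exp_part:
  "has_asymp_expansion (\<lambda>n. exp (a * (real n * (ln (1 - c / real n) + c / real n))))
     (fps_exp_part a c)"
proof -
  let ?G = "fps_log_one_minus c + fps_const c * fps_X"
  have G0: "fps_nth ?G 0 = 0"
    by (simp add: fps_log_one_minus_def)
  have "has_asymp_expansion (\<lambda>n. ln (1 - c / real n) + c * (1 / real n)) ?G"
    by (intro has_asymp_expansion_add has_asymp_expansion_log_one_minus
          has_asymp_expansion_cmult has_asymp_expansion_fps_X)
  from has_asymp_expansion_cmult[OF has_asymp_expansion_times_n[OF this G0], of a]
  have "has_asymp_expansion (\<lambda>n. a * (real n * (ln (1 - c / real n) + c / real n)))
          (fps_const a * fps_shift 1 ?G)"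
    by simp
  moreover have "fps_nth (fps_const a * fps_shift 1 ?G) 0 = 0"
    by (simp add: fps_log_one_minus_def fps_ln_nth)
  ultimately show ?thesis
    unfolding fps_exp_part_def by (rule has_asymp_expansion_compose[OF has_fps_expansion_exp1])
qed

lemma growth_scale_shift_ratio:
  assumes "\<beta> > 0" and "j < n"
  shows "growth_scale \<alpha> \<beta> \<gamma> (n - j) / growth_scale \<alpha> \<beta> \<gamma> n =
    exp (- real \<alpha> * real j) * \<beta> powi (- int j) * (1 / real n) ^ (\<alpha> * j)
    * (1 - real j / real n) powr (\<gamma> - real \<alpha> * real j)
    * exp (real \<alpha> * (real n * (ln (1 - real j / real n) + real j / real n)))"
    (is "?L = ?R")
proof -
  define t where "t = 1 - real j / real n"
  have n: "real n > 0" and m: "real (n - j) = real n * t"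
    using assms(2) by (auto simp: t_def of_nat_diff field_simps)
  have t: "t > 0"
    using assms(2) n by (simp add: t_def field_simps)
  have lnm: "ln (real n - real j) = ln (real n) + ln t"
    using assms(2) n t m by (simp add: of_nat_diff ln_mult)
  have scale_pos: "growth_scale \<alpha> \<beta> \<gamma> k > 0" if "k > 0" for k
    using assms(1) that by (simp add: growth_scale_def)
  have ln_scale: "ln (growth_scale \<alpha> \<beta> \<gamma> k) =
      real \<alpha> * real k * ln (real k) + real k * ln \<beta> + \<gamma> * ln (real k)" if "k > 0" for k
    using assms(1) that by (simp add: growth_scale_def ln_mult ln_realpow ln_powr)
  have "ln ?L = ln (growth_scale \<alpha> \<beta> \<gamma> (n - j)) - ln (growth_scale \<alpha> \<beta> \<gamma> n)"
    using assms by (intro ln_divide_pos scale_pos) auto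
  also have "\<dots> = - real \<alpha> * real j * ln (real n) - real j * ln \<beta>
      + (\<gamma> - real \<alpha> * real j) * ln t + real \<alpha> * real n * ln t"
    using assms lnm by (simp add: ln_scale of_nat_diff algebra_simps)
  also have "\<dots> = ln ?R"
    using assms(1) n t unfolding t_def[symmetric]
    by (simp add: ln_mult ln_realpow ln_powr power_int_minus ln_inverse ln_div algebra_simps)
  finally show ?thesis
    using assms t by (simp add: t_def[symmetric] scale_pos)
qed

lemma has_asymp_expansion_growth_scale_shift:
  assumes "\<beta> > 0"
  shows "has_asymp_expansion (\<lambda>n. growth_scale \<alpha> \<beta> \<gamma> (n - j) / growth_scale \<alpha> \<beta> \<gamma> n)
    (fps_const (exp (- real \<alpha> * real j) * \<beta> powi (- int j)) * fps_X ^ (\<alpha> * j)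
     * fps_one_minus_pow (real j) (\<gamma> - real \<alpha> * real j) * fps_exp_part (real \<alpha>) (real j))"
    (is "has_asymp_expansion _ ?F")
proof -
  have "has_asymp_expansion (\<lambda>n.
      exp (- real \<alpha> * real j) * \<beta> powi (- int j) * (1 / real n) ^ (\<alpha> * j)
      * (1 - real j / real n) powr (\<gamma> - real \<alpha> * real j)
      * exp (real \<alpha> * (real n * (ln (1 - real j / real n) + real j / real n)))) ?F"
    by (intro has_asymp_expansion_mult has_asymp_expansion_const has_asymp_expansion_power
          has_asymp_expansion_fps_X has_asymp_expansion_one_minus_pow has_asymp_expansion_exp_part)
  then show ?thesis
    by (rule has_asymp_expansion_cong[rotated])
       (rule eventually_mono[OF eventually_gt_at_top[of j]], simp add: growth_scale_shift_ratio assms)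
qed

theorem lemma11:
  fixes \<alpha> :: nat and \<beta> \<gamma> :: real and a :: "nat \<Rightarrow> real" and A :: "real fps" and j :: nat
  assumes "\<alpha> > 0" and "\<beta> > 0" and "A \<noteq> 0"
    and "asymp_expansion a (growth_scale \<alpha> \<beta> \<gamma>) A"
  shows "asymp_expansion (\<lambda>n. a (n - j)) (growth_scale \<alpha> \<beta> \<gamma>) (A_j \<alpha> \<beta> \<gamma> A j)"
proof -
  let ?s = "growth_scale \<alpha> \<beta> \<gamma>"
  have s_nonzero: "\<forall>\<^sub>F n in at_top. ?s n \<noteq> 0"
    using eventually_gt_at_top[of 0]
    by eventually_elim (use assms(2) in \<open>auto simp: growth_scale_def\<close>)
  have "has_asymp_expansion (\<lambda>n. a n / ?s n) A"
    using assms(4) by (simp add: asymp_expansion_iff_has_asymp_expansion[OF s_nonzero])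
  from has_asymp_expansion_mult[OF has_asymp_expansion_growth_scale_shift[OF assms(2)]
         has_asymp_expansion_shift[OF this]]
  have "has_asymp_expansion (\<lambda>n. ?s (n - j) / ?s n * (a (n - j) / ?s (n - j))) (A_j \<alpha> \<beta> \<gamma> A j)"
    unfolding A_j_def .
  moreover have "\<forall>\<^sub>F n in at_top. ?s (n - j) / ?s n * (a (n - j) / ?s (n - j)) = a (n - j) / ?s n"
    using eventually_gt_at_top[of j]
    by eventually_elim (use assms(2) in \<open>auto simp: growth_scale_def\<close>)
  ultimately show ?thesis
    unfolding asymp_expansion_iff_has_asymp_expansion[OF s_nonzero]
    by (rule has_asymp_expansion_cong[rotated])
qed

end
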